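(* Let $p>2$ be a prime number. Let $n\geq 0$ and $m\geq 1$ be integers, let $G$ be a finite $p$-group, let $f\in\mathcal{F}_G$, and let $H, C_1, C_2,\ldots, C_{p-1}$ be normal subgroups of $G$ such that: (1) $C_i\subsetneq H$ for all $1\leq i\leq p-1$; (2) $\displaystyle\max_{g\in H\setminus\left(\bigcup_{i=1}^{p-1}C_i\right)} b_{f(H,m)}(g)\leq n$. Then there exists a normal subgroup $N$ of $G$ such that: (a) $N\subseteq H$; (b) $\log_p|H:N|\leq n$; (c) $cl_f(N)\leq n+m$; (d) $N\not\subseteq\bigcup_{i=1}^{p-1}C_i$.
   Context: For a finite group $G$, $Z_G(x)$ is the centralizer of $x$ in $G$, and for a subset (or subgroup) $H$, $Z_G(H)=\bigcap_{h\in H}Z_G(h)$. Commutators are $[x,y]=x^{-1}y^{-1}xy$, and for subgroups $G_1,G_2$, $[G_1,G_2]$ is the subgroup generated by all $[g_1,g_2]$ with $g_i\in G_i$. For $g\in G$ and a subgroup $K$ of $G$, $b_K(g):=\log_p|K : K\cap Z_G(g)|$. $\mathcal{F}_G$ denotes the set of all functions $f$ from (normal subgroups of $G$) $\times\,\mathbb{N}_{\geq1}$ to (normal subgroups of $G$) such that: (i) $f(N,i)\subseteq f(M,j)$ whenever $N\subseteq M$ are normal subgroups of $G$ and $1\leq j\leq i$; (ii) $[N,f(N,i)]\neq[N,f(N,i+1)]$ for every normal subgroup $N$ of $G$ and every integer $i\geq1$ with $f(N,i)\not\subseteq Z_G(N)$. For $f\in\mathcal{F}_G$ and a normal subgroup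 $N$ of $G$, $cl_f(N):=\min\{n\in\mathbb{N} : f(N,n)\subseteq Z_G(N)\}$. *)

theory Defs
  imports "HOL-Algebra.Algebra" Complex_Main
begin

definition centralizer_elt :: "('a, 'b) monoid_scheme \<Rightarrow> 'a \<Rightarrow> 'a set" ("Z\<index>'(_')") where
  "centralizer_elt G x = {y \<in> carrier G. x \<otimes>\<^bsub>G\<^esub> y = y \<otimes>\<^bsub>G\<^esub> x}"

definition centralizer_set :: "('a, 'b) monoid_scheme \<Rightarrow> 'a set \<Rightarrow> 'a set" where
  "centralizer_set G H = {y \<in> carrier G. \<forall>h\<in>H. h \<otimes>\<^bsub>G\<^esub> y = y \<otimes>\<^bsub>G\<^esub> h}"

definition commutator :: "('a, 'b) monoid_scheme \<Rightarrow> 'a \<Rightarrow> 'a \<Rightarrow> 'a" where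
  "commutator G x y = inv\<^bsub>G\<^esub> x \<otimes>\<^bsub>G\<^esub> inv\<^bsub>G\<^esub> y \<otimes>\<^bsub>G\<^esub> x \<otimes>\<^bsub>G\<^esub> y"

definition comm_subgroup :: "('a, 'b) monoid_scheme \<Rightarrow> 'a set \<Rightarrow> 'a set \<Rightarrow> 'a set" where
  "comm_subgroup G G1 G2 = generate G {commutator G g1 g2 | g1 g2. g1 \<in> G1 \<and> g2 \<in> G2}"

definition p_group :: "('a, 'b) monoid_scheme \<Rightarrow> nat \<Rightarrow> bool" where
  "p_group G p \<longleftrightarrow> group G \<and> finite (carrier G) \<and> (\<exists>k. card (carrier G) = p ^ k)"

definition b_fun :: "('a, 'b) monoid_scheme \<Rightarrow> nat \<Rightarrow> 'a set \<Rightarrow> 'a \<Rightarrow> real" where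
  "b_fun G p K g = log (real p) (real (card K) / real (card (K \<inter> centralizer_elt G g)))"

text \<open>The class F_G; f is only constrained on normal subgroups and indices i >= 1.\<close>
definition F_class :: "('a, 'b) monoid_scheme \<Rightarrow> ('a set \<Rightarrow> nat \<Rightarrow> 'a set) set" where
  "F_class G = {f.
     (\<forall>N i. N \<lhd> G \<and> 1 \<le> i \<longrightarrow> f N i \<lhd> G) \<and>
     (\<forall>N M i j. N \<lhd> G \<and> M \<lhd> G \<and> N \<subseteq> M \<and> 1 \<le> j \<and> j \<le> i \<longrightarrow> f N i \<subseteq> f M j) \<and>
     (\<forall>N i. N \<lhd> G \<and> 1 \<le> i \<and> \<not> f N i \<subseteq> centralizer_set G N \<longrightarrow>
            comm_subgroup G N (f N i) \<noteq> comm_subgroup G N (f N (i + 1)))}"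

definition cl_f :: "('a, 'b) monoid_scheme \<Rightarrow> ('a set \<Rightarrow> nat \<Rightarrow> 'a set) \<Rightarrow> 'a set \<Rightarrow> nat" where
  "cl_f G f N = (LEAST n. 1 \<le> n \<and> f N n \<subseteq> centralizer_set G N)"

end

theory Submission
  imports Defs
begin

text \<open>
  Induction on \<open>n\<close>, with \<open>m\<close> increasing. If \<open>f(H, m)\<close> centralizes \<open>H\<close>, then \<open>N = H\<close> works, as
  a \<open>p\<close>-group is not the union of \<open>p\<close> proper subgroups. Otherwise \<open>[H, f(H, m)] \<noteq> [H, f(H, m + 1)]\<close>,
  so the elements of \<open>H\<close> centralizing \<open>f(H, m)\<close> modulo \<open>[H, f(H, m + 1)]\<close> form a proper normal
  subgroup \<open>D\<close> of \<open>H\<close>. For \<open>g \<in> H - D\<close> the centralizer of \<open>g\<close> has index in \<open>f(H, m + 1)\<close> at most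
  \<open>1/p\<close> times its index in \<open>f(H, m)\<close>, i.e. \<open>b\<close> drops by at least one.

  Enlarge \<open>D\<close> and every \<open>C\<^sub>i\<close> to normal subgroups \<open>W\<^sub>D\<close>, \<open>W\<^sub>i\<close> of index \<open>p\<close> in \<open>H\<close> with \<open>H/W\<close> central
  in \<open>G/W\<close>. These are at most \<open>p\<close> proper subgroups, so some \<open>x \<in> H\<close> avoids all of them; the drop
  of \<open>b\<close> at \<open>x\<close> forces \<open>n > 0\<close>. The subgroup \<open>N = (W\<^sub>1 \<inter> W\<^sub>D)\<langle>x\<rangle>\<close> is normal of index at most \<open>p\<close>
  in \<open>H\<close> and meets \<open>W\<^sub>D\<close> inside \<open>W\<^sub>1\<close>, so its elements outside all \<open>W\<^sub>i\<close> lie outside \<open>D\<close>. The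
  induction hypothesis for \<open>N\<close>, \<open>m + 1\<close> and \<open>C'\<^sub>i = W\<^sub>i \<inter> N\<close> yields the subgroup.
\<close>

lemma (in group) inv_mult_cancel_left [simp]:
  "x \<in> carrier G \<Longrightarrow> y \<in> carrier G \<Longrightarrow> inv x \<otimes> (x \<otimes> y) = y"
  by (simp flip: m_assoc)

lemma (in group) mult_inv_cancel_left [simp]:
  "x \<in> carrier G \<Longrightarrow> y \<in> carrier G \<Longrightarrow> x \<otimes> (inv x \<otimes> y) = y"
  by (simp flip: m_assoc)

lemma (in group) finite_subgroupI:
  assumes "finite (carrier G)" and "S \<subseteq> carrier G" and "\<one> \<in> S"
    and "\<And>x y. x \<in> S \<Longrightarrow> y \<in> S \<Longrightarrow> x \<otimes> y \<in> S"
  shows "subgroup S G"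
proof (rule subgroupI)
  fix x assume x: "x \<in> S"
  then have x_carrier: "x \<in> carrier G" using assms(2) by blast
  have pow_in: "x [^] (n::nat) \<in> S" for n
    by (induction n) (auto simp: assms(3,4) x)
  have "0 < order G" using assms(1) order_gt_0_iff_finite by simp
  then have "x [^] (order G - 1) \<otimes> x = \<one>"
    using pow_order_eq_1[OF x_carrier] x_carrier by (simp flip: nat_pow_Suc)
  then have "inv x = x [^] (order G - 1)"
    using x_carrier by (simp add: inv_equality)
  then show "inv x \<in> S" using pow_in by simp
qed (use assms in auto)

lemma (in group) subgroup_nat_pow_closed:
  assumes "subgroup H G" and "x \<in> H"
  shows "x [^] (k::nat) \<in> H"
  using assms by (induction k) (simp_all add: subgroup.one_closed subgroup.m_closed)

lemma (in group) card_Union_subgroups_le: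
  assumes "finite \<K>" and subgroups: "\<And>K. K \<in> \<K> \<Longrightarrow> subgroup K G \<and> finite K"
  shows "card (\<Union>\<K>) \<le> Suc (\<Sum>K\<in>\<K>. card K - 1)"
proof -
  have one: "\<one> \<in> K" and finite: "finite K" if "K \<in> \<K>" for K
    using subgroups[OF that] subgroup.one_closed by blast+
  have finite_rest: "finite (\<Union>K\<in>\<K>. K - {\<one>})" using \<open>finite \<K>\<close> finite by blast
  have "card (\<Union>\<K>) \<le> card (insert \<one> (\<Union>K\<in>\<K>. K - {\<one>}))"
    using finite_rest by (intro card_mono) auto
  also have "\<dots> \<le> Suc (card (\<Union>K\<in>\<K>. K - {\<one>}))"
    using finite_rest by (simp only: card_insert_if) simp
  also have "\<dots> \<le> Suc (\<Sum>K\<in>\<K>. card (K - {\<one>}))"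
    using card_UN_le[OF \<open>finite \<K>\<close>, of "\<lambda>K. K - {\<one>}"] by (simp only: Suc_le_mono)
  also have "(\<Sum>K\<in>\<K>. card (K - {\<one>})) = (\<Sum>K\<in>\<K>. card K - 1)"
    using one finite by (intro sum.cong) simp_all
  finally show ?thesis .
qed

lemma (in group) card_cosets_in_subgroup:
  assumes "subgroup W G" and "subgroup H G" and "W \<subseteq> H"
  shows "card ((\<lambda>y. W #> y) ` H) * card W = card H"
proof -
  interpret H: group "G\<lparr>carrier := H\<rparr>"
    using assms(2) by (rule subgroup_imp_group)
  have "rcosets\<^bsub>G\<lparr>carrier := H\<rparr>\<^esub> W = (\<lambda>y. W #> y) ` H"
    by (auto simp: RCOSETS_def)
  then show ?thesis
    using H.lagrange[OF subgroup_incl[OF assms]] by (simp add: order_def)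
qed

text \<open>By Lagrange's theorem in the quotient \<open>H/W\<close>, which has order \<open>q\<close>.\<close>

lemma (in group) pow_index_mem:
  assumes W: "W \<lhd> G" and H: "subgroup H G" and "W \<subseteq> H" and "finite H"
    and index: "card H = q * card W" and y: "y \<in> H"
  shows "y [^] q \<in> W"
proof -
  interpret H: group "G\<lparr>carrier := H\<rparr>"
    using H by (rule subgroup_imp_group)
  interpret W: normal W "G\<lparr>carrier := H\<rparr>"
    using normal_restrict_supergroup[OF H W \<open>W \<subseteq> H\<close>] .
  interpret Q: group "G\<lparr>carrier := H\<rparr> Mod W"
    by (rule W.factorgroup_is_group)
  have "0 < card H" using y \<open>finite H\<close> card_gt_0_iff by blast
  then have "0 < card W" using index by simp
  have "rcosets\<^bsub>G\<lparr>carrier := H\<rparr>\<^esub> W = (\<lambda>y. W #> y) ` H"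
    by (auto simp: RCOSETS_def)
  then have "order (G\<lparr>carrier := H\<rparr> Mod W) = q"
    using card_cosets_in_subgroup[OF normal_imp_subgroup[OF W] H \<open>W \<subseteq> H\<close>] index \<open>0 < card W\<close>
    by (simp add: order_def FactGroup_def)
  moreover have "W #> y \<in> carrier (G\<lparr>carrier := H\<rparr> Mod W)"
    using y by (auto simp: FactGroup_def RCOSETS_def)
  ultimately have "(W #> y) [^]\<^bsub>G\<lparr>carrier := H\<rparr> Mod W\<^esub> q = W"
    using Q.pow_order_eq_1 by simp
  then have "W #> (y [^] q) = W"
    using W.FactGroup_pow[of y q] y by (simp flip: nat_pow_consistent)
  then show ?thesis
    using rcos_self[of "y [^] q" W] y H normal_imp_subgroup[OF W] subgroup.mem_carrier by force
qed

lemma (in group) card_mult_fiber: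
  assumes A: "subgroup A G" and B: "subgroup B G" and a: "a \<in> A" and b: "b \<in> B"
  shows "card {(x, y) \<in> A \<times> B. x \<otimes> y = a \<otimes> b} = card (A \<inter> B)"
proof -
  have [simp]: "a \<in> carrier G" "b \<in> carrier G"
    using subgroup.mem_carrier[OF A a] subgroup.mem_carrier[OF B b] .
  have "{(x, y) \<in> A \<times> B. x \<otimes> y = a \<otimes> b} = (\<lambda>t. (a \<otimes> t, inv t \<otimes> b)) ` (A \<inter> B)"
  proof (intro equalityI subsetI)
    fix w assume "w \<in> {(x, y) \<in> A \<times> B. x \<otimes> y = a \<otimes> b}"
    then obtain x y where w: "w = (x, y)" and x: "x \<in> A" and y: "y \<in> B" and xy: "x \<otimes> y = a \<otimes> b"
      by blast
    have [simp]: "x \<in> carrier G" "y \<in> carrier G"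
      using subgroup.mem_carrier[OF A x] subgroup.mem_carrier[OF B y] .
    have "inv a \<otimes> x = inv a \<otimes> (x \<otimes> y) \<otimes> inv y"
      by (simp add: m_assoc)
    also have "\<dots> = b \<otimes> inv y"
      using xy by (simp add: m_assoc)
    finally have t: "inv a \<otimes> x = b \<otimes> inv y" .
    then have "inv a \<otimes> x \<in> A \<inter> B"
      using a b x y A B by (metis IntI subgroup.m_closed subgroup.m_inv_closed)
    moreover have "inv (inv a \<otimes> x) \<otimes> b = y"
      unfolding t by (simp add: inv_mult_group m_assoc)
    then have "w = (a \<otimes> (inv a \<otimes> x), inv (inv a \<otimes> x) \<otimes> b)"
      using w by simp
    ultimately show "w \<in> (\<lambda>t. (a \<otimes> t, inv t \<otimes> b)) ` (A \<inter> B)" by blast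
  next
    fix w assume "w \<in> (\<lambda>t. (a \<otimes> t, inv t \<otimes> b)) ` (A \<inter> B)"
    then obtain t where t: "t \<in> A" "t \<in> B" and w: "w = (a \<otimes> t, inv t \<otimes> b)" by blast
    have "t \<in> carrier G" using subgroup.mem_carrier[OF A t(1)] .
    then show "w \<in> {(x, y) \<in> A \<times> B. x \<otimes> y = a \<otimes> b}"
      using a b t A B unfolding w by (simp add: subgroup.m_closed subgroup.m_inv_closed m_assoc)
  qed
  moreover have "inj_on (\<lambda>t. (a \<otimes> t, inv t \<otimes> b)) (A \<inter> B)"
    using A subgroup.mem_carrier by (fastforce intro: inj_onI)
  ultimately show ?thesis by (simp add: card_image)
qed

lemma (in group) card_set_mult_Int:
  assumes "finite (carrier G)" and A: "subgroup A G" and B: "subgroup B G"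
  shows "card (A <#> B) * card (A \<inter> B) = card A * card B"
proof -
  define fiber where "fiber z = {(x, y) \<in> A \<times> B. x \<otimes> y = z}" for z
  have fin: "finite A" "finite B"
    using assms finite_subset subgroup.subset by metis+
  have card_fiber: "card (fiber z) = card (A \<inter> B)" if "z \<in> A <#> B" for z
    using that card_mult_fiber[OF A B] unfolding fiber_def set_mult_def by blast
  have "A \<times> B = (\<Union>z\<in>A <#> B. fiber z)"
    unfolding fiber_def set_mult_def by auto
  then have "card A * card B = card (\<Union>z\<in>A <#> B. fiber z)"
    by (simp flip: card_cartesian_product)
  also have "\<dots> = (\<Sum>z\<in>A <#> B. card (fiber z))"
    using fin by (intro card_UN_disjoint)
      (auto simp: set_mult_def fiber_def intro: finite_subset[of _ "A \<times> B"])
  also have "\<dots> = card (A <#> B) * card (A \<inter> B)"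
    using card_fiber by simp
  finally show ?thesis by simp
qed

lemma (in group) index_Int_mono:
  assumes "finite (carrier G)" and A: "subgroup A G" and B: "subgroup B G" and Y: "subgroup Y G"
    and "A \<subseteq> B"
  shows "card A * card (B \<inter> Y) \<le> card B * card (A \<inter> Y)"
proof -
  have BY: "subgroup (B \<inter> Y) G" using B Y by (rule subgroups_Inter_pair)
  have "A <#> (B \<inter> Y) \<subseteq> B"
    unfolding set_mult_def using \<open>A \<subseteq> B\<close> subgroup.m_closed[OF B] by blast
  then have "card (A <#> (B \<inter> Y)) \<le> card B"
    using assms(1) B card_mono finite_subset subgroup.subset by metis
  moreover have "A \<inter> (B \<inter> Y) = A \<inter> Y" using \<open>A \<subseteq> B\<close> by blast
  ultimately show ?thesis
    using card_set_mult_Int[OF assms(1) A BY] by (metis mult_le_mono1)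
qed

lemma (in group) conj_rcos:
  assumes "W \<lhd> G" and g: "g \<in> carrier G" and y: "y \<in> carrier G"
  shows "g <# (W #> y) #> inv g = W #> (g \<otimes> y \<otimes> inv g)"
proof -
  have W: "W \<subseteq> carrier G" using assms(1) normal_imp_subgroup subgroup.subset by blast
  have "g <# (W #> y) = W #> g #> y"
    using coset_assoc[OF g y W] normal.coset_eq[OF assms(1)] g by simp
  then show ?thesis using W g y by (simp add: coset_mult_assoc)
qed

section \<open>Commutators\<close>

lemma (in group) commutator_closed [simp]:
  "x \<in> carrier G \<Longrightarrow> y \<in> carrier G \<Longrightarrow> commutator G x y \<in> carrier G"
  unfolding commutator_def by simp

lemma (in group) conj_commutator:
  assumes "x \<in> carrier G" and "y \<in> carrier G" and "k \<in> carrier G"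
  shows "k \<otimes> commutator G x y \<otimes> inv k = commutator G (k \<otimes> x \<otimes> inv k) (k \<otimes> y \<otimes> inv k)"
  unfolding commutator_def using assms by (simp add: m_assoc inv_mult_group)

lemma (in group) commutator_mult_centralizer:
  assumes g: "g \<in> carrier G" and l: "l \<in> carrier G" and c: "c \<in> centralizer_elt G g"
  shows "commutator G g (l \<otimes> c) = inv c \<otimes> commutator G g l \<otimes> c"
proof -
  have c_carrier: "c \<in> carrier G" and gc: "g \<otimes> c = c \<otimes> g"
    using c unfolding centralizer_elt_def by auto
  have "inv g \<otimes> inv c = inv (c \<otimes> g)"
    using g c_carrier by (simp add: inv_mult_group)
  also have "\<dots> = inv c \<otimes> inv g"
    using g c_carrier by (simp add: inv_mult_group flip: gc)
  finally have swap: "inv g \<otimes> (inv c \<otimes> r) = inv c \<otimes> (inv g \<otimes> r)" if "r \<in> carrier G" for r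
    using that g c_carrier by (simp flip: m_assoc)
  show ?thesis
    unfolding commutator_def using g l c_carrier by (simp add: m_assoc inv_mult_group swap)
qed

lemma commutator_mem_comm_subgroup:
  "x \<in> H \<Longrightarrow> y \<in> K \<Longrightarrow> commutator G x y \<in> comm_subgroup G H K"
  unfolding comm_subgroup_def by (rule generate.incl) blast

lemma (in group) comm_subgroup_normal:
  assumes H: "H \<lhd> G" and K: "K \<lhd> G"
  shows "comm_subgroup G H K \<lhd> G"
  unfolding comm_subgroup_def
proof (rule normal_generateI)
  have "H \<subseteq> carrier G" "K \<subseteq> carrier G"
    using H K normal_imp_subgroup subgroup.subset by blast+
  then show "{commutator G x y |x y. x \<in> H \<and> y \<in> K} \<subseteq> carrier G"
    by (blast intro: commutator_closed)
  fix c g assume "c \<in> {commutator G x y |x y. x \<in> H \<and> y \<in> K}" and g: "g \<in> carrier G"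
  then obtain x y where x: "x \<in> H" and y: "y \<in> K" and c: "c = commutator G x y" by blast
  have "g \<otimes> c \<otimes> inv g = commutator G (g \<otimes> x \<otimes> inv g) (g \<otimes> y \<otimes> inv g)"
    using c conj_commutator x y g H K normal_imp_subgroup subgroup.mem_carrier by metis
  then show "g \<otimes> c \<otimes> inv g \<in> {commutator G x y |x y. x \<in> H \<and> y \<in> K}"
    using normal.inv_op_closed2[OF H g x] normal.inv_op_closed2[OF K g y] by blast
qed

lemma (in group) centralizer_elt_subgroup:
  assumes g: "g \<in> carrier G"
  shows "subgroup (centralizer_elt G g) G"
proof (rule subgroupI)
  fix y z assume "y \<in> centralizer_elt G g" and "z \<in> centralizer_elt G g"
  then have y: "y \<in> carrier G" "g \<otimes> y = y \<otimes> g" and z: "z \<in> carrier G" "g \<otimes> z = z \<otimes> g"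
    unfolding centralizer_elt_def by auto
  have "g \<otimes> (y \<otimes> z) = g \<otimes> y \<otimes> z"
    using g y(1) z(1) by (simp add: m_assoc)
  also have "\<dots> = y \<otimes> (g \<otimes> z)"
    using g y(1) z(1) by (simp add: y(2) m_assoc)
  also have "\<dots> = y \<otimes> z \<otimes> g"
    using g y(1) z(1) by (simp add: z(2) m_assoc)
  finally have "g \<otimes> (y \<otimes> z) = y \<otimes> z \<otimes> g" .
  then show "y \<otimes> z \<in> centralizer_elt G g"
    unfolding centralizer_elt_def using y z by simp
  have "g \<otimes> inv y = inv y \<otimes> (y \<otimes> g) \<otimes> inv y"
    using g y by (simp add: m_assoc flip: m_assoc[of "inv y"])
  also have "\<dots> = inv y \<otimes> g"
    using g y by (simp add: m_assoc flip: y(2))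
  finally show "inv y \<in> centralizer_elt G g"
    unfolding centralizer_elt_def using y by simp
qed (auto simp: centralizer_elt_def g)

definition centralizer_mod :: "('a, 'b) monoid_scheme \<Rightarrow> 'a set \<Rightarrow> 'a set \<Rightarrow> 'a set \<Rightarrow> 'a set" where
  "centralizer_mod G S H L = {y \<in> H. \<forall>l\<in>L. commutator G y l \<in> S}"

lemma (in group) centralizer_mod_subgroup:
  assumes "finite (carrier G)" and S: "S \<lhd> G" and H: "subgroup H G" and L_carrier: "L \<subseteq> carrier G"
  shows "subgroup (centralizer_mod G S H L) G"
proof (rule finite_subgroupI[OF assms(1)])
  have S_subgroup: "subgroup S G" using S by (rule normal_imp_subgroup)
  show D_carrier: "centralizer_mod G S H L \<subseteq> carrier G"
    unfolding centralizer_mod_def using subgroup.subset[OF H] by blast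
  have "commutator G \<one> l = \<one>" if "l \<in> L" for l
    using that L_carrier unfolding commutator_def by auto
  then show "\<one> \<in> centralizer_mod G S H L"
    unfolding centralizer_mod_def using subgroup.one_closed[OF H] subgroup.one_closed[OF S_subgroup]
    by simp
  fix y z assume y: "y \<in> centralizer_mod G S H L" and z: "z \<in> centralizer_mod G S H L"
  have [simp]: "y \<in> carrier G" "z \<in> carrier G" using y z D_carrier by auto
  have "commutator G (y \<otimes> z) l \<in> S" if l: "l \<in> L" for l
  proof -
    have [simp]: "l \<in> carrier G" using l L_carrier by blast
    have "commutator G y l \<in> S" "commutator G z l \<in> S"
      using y z l unfolding centralizer_mod_def by auto
    then have "(inv z \<otimes> commutator G y l \<otimes> z) \<otimes> commutator G z l \<in> S"
      using normal.inv_op_closed1[OF S] subgroup.m_closed[OF S_subgroup] by simp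
    moreover have "commutator G (y \<otimes> z) l = (inv z \<otimes> commutator G y l \<otimes> z) \<otimes> commutator G z l"
      unfolding commutator_def by (simp add: m_assoc inv_mult_group)
    ultimately show ?thesis by simp
  qed
  moreover have "y \<otimes> z \<in> H"
    using y z subgroup.m_closed[OF H] unfolding centralizer_mod_def by blast
  ultimately show "y \<otimes> z \<in> centralizer_mod G S H L" unfolding centralizer_mod_def by blast
qed

lemma (in group) centralizer_mod_normal:
  assumes "finite (carrier G)" and S: "S \<lhd> G" and H: "H \<lhd> G" and L: "L \<lhd> G"
  shows "centralizer_mod G S H L \<lhd> G"
proof -
  have L_carrier: "L \<subseteq> carrier G" using subgroup.subset[OF normal_imp_subgroup[OF L]] .
  show ?thesis
  proof (rule normal_invI[OF centralizer_mod_subgroup[OF assms(1) S normal_imp_subgroup[OF H] L_carrier]])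
    fix k y assume k: "k \<in> carrier G" and y: "y \<in> centralizer_mod G S H L"
    have y_carrier: "y \<in> carrier G"
      using y subgroup.mem_carrier[OF normal_imp_subgroup[OF H]] unfolding centralizer_mod_def by blast
    have "commutator G (k \<otimes> y \<otimes> inv k) l \<in> S" if l: "l \<in> L" for l
    proof -
      have "l \<in> carrier G" using l L_carrier by blast
      then have "k \<otimes> (inv k \<otimes> l \<otimes> k) \<otimes> inv k = l"
        using k by (simp add: m_assoc)
      then have "commutator G (k \<otimes> y \<otimes> inv k) l
          = k \<otimes> commutator G y (inv k \<otimes> l \<otimes> k) \<otimes> inv k"
        using conj_commutator[of y "inv k \<otimes> l \<otimes> k" k] k y_carrier \<open>l \<in> carrier G\<close> by simp
      moreover have "commutator G y (inv k \<otimes> l \<otimes> k) \<in> S"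
        using y normal.inv_op_closed1[OF L k l] unfolding centralizer_mod_def by blast
      ultimately show ?thesis
        using normal.inv_op_closed2[OF S k] by simp
    qed
    moreover have "k \<otimes> y \<otimes> inv k \<in> H"
      using y normal.inv_op_closed2[OF H k] unfolding centralizer_mod_def by blast
    ultimately show "k \<otimes> y \<otimes> inv k \<in> centralizer_mod G S H L"
      unfolding centralizer_mod_def by blast
  qed
qed

lemma (in group) comm_subgroup_subset_iff_centralizer_mod:
  assumes "subgroup S G"
  shows "comm_subgroup G H L \<subseteq> S \<longleftrightarrow> centralizer_mod G S H L = H"
proof (rule iffI)
  assume sub: "comm_subgroup G H L \<subseteq> S"
  have "commutator G x y \<in> S" if "x \<in> H" "y \<in> L" for x y
    using subsetD[OF sub commutator_mem_comm_subgroup[OF that]] .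
  then show "centralizer_mod G S H L = H"
    unfolding centralizer_mod_def by blast
next
  assume eq: "centralizer_mod G S H L = H"
  have "commutator G x y \<in> S" if "x \<in> H" "y \<in> L" for x y
  proof -
    have "x \<in> centralizer_mod G S H L" using that eq by simp
    then show ?thesis using that unfolding centralizer_mod_def by blast
  qed
  then have "{commutator G x y |x y. x \<in> H \<and> y \<in> L} \<subseteq> S"
    by blast
  then show "comm_subgroup G H L \<subseteq> S"
    unfolding comm_subgroup_def by (rule generate_subgroup_incl[OF _ assms])
qed

lemma (in group) centralizer_mod_psubset:
  assumes "L' \<subseteq> L" and "comm_subgroup G H L \<noteq> comm_subgroup G H L'"
    and "comm_subgroup G H L' \<lhd> G"
  shows "centralizer_mod G (comm_subgroup G H L') H L \<subset> H"
proof -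
  have "comm_subgroup G H L' \<subseteq> comm_subgroup G H L"
    unfolding comm_subgroup_def using \<open>L' \<subseteq> L\<close> by (intro mono_generate) blast
  then have "\<not> comm_subgroup G H L \<subseteq> comm_subgroup G H L'"
    using assms(2) by blast
  then show ?thesis
    using comm_subgroup_subset_iff_centralizer_mod[OF normal_imp_subgroup[OF assms(3)]]
    unfolding centralizer_mod_def by blast
qed

lemma (in group) subset_centralizer_mod_self:
  assumes W: "W \<lhd> G" and "W \<subseteq> H"
  shows "W \<subseteq> centralizer_mod G W H (carrier G)"
proof
  fix w assume w: "w \<in> W"
  have W_subgroup: "subgroup W G" using W by (rule normal_imp_subgroup)
  have "commutator G w g \<in> W" if g: "g \<in> carrier G" for g
  proof -
    have "commutator G w g = inv w \<otimes> (inv g \<otimes> w \<otimes> g)"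
      unfolding commutator_def using g subgroup.mem_carrier[OF W_subgroup w] by (simp add: m_assoc)
    moreover have "inv g \<otimes> w \<otimes> g \<in> W" by (rule normal.inv_op_closed1[OF W g w])
    ultimately show ?thesis
      using subgroup.m_closed[OF W_subgroup subgroup.m_inv_closed[OF W_subgroup w]] by simp
  qed
  then show "w \<in> centralizer_mod G W H (carrier G)"
    unfolding centralizer_mod_def using w \<open>W \<subseteq> H\<close> by blast
qed

lemma (in group) normal_if_commutators_in:
  assumes K: "subgroup K G" and "U \<subseteq> K" and "K \<subseteq> H"
    and central: "\<forall>y\<in>H. \<forall>g\<in>carrier G. commutator G y g \<in> U"
  shows "K \<lhd> G"
proof (rule normal_invI[OF K])
  fix g k assume g: "g \<in> carrier G" and k: "k \<in> K"
  have k_carrier: "k \<in> carrier G" using subgroup.mem_carrier[OF K k] .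
  have "g \<otimes> k \<otimes> inv g = k \<otimes> commutator G k (inv g)"
    unfolding commutator_def using g k_carrier by (simp add: m_assoc)
  moreover have "commutator G k (inv g) \<in> U"
    using central \<open>K \<subseteq> H\<close> k g by blast
  then have "commutator G k (inv g) \<in> K"
    using \<open>U \<subseteq> K\<close> by blast
  ultimately show "g \<otimes> k \<otimes> inv g \<in> K"
    using subgroup.m_closed[OF K k] by simp
qed

lemma (in group) subgroup_UN_rcos_pow:
  fixes n :: nat
  assumes "finite (carrier G)" and U: "U \<lhd> G" and x: "x \<in> carrier G"
    and x_pow: "x [^] n \<in> U" and "0 < n"
  shows "subgroup (\<Union>k<n. U #> x [^] k) G"
proof (rule finite_subgroupI[OF assms(1)])
  have U_subgroup: "subgroup U G" using U by (rule normal_imp_subgroup)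
  have U_carrier: "U \<subseteq> carrier G" using subgroup.subset[OF U_subgroup] .
  have mem: "z \<in> (\<Union>k<n. U #> x [^] k) \<longleftrightarrow> (\<exists>u\<in>U. \<exists>k<n. z = u \<otimes> x [^] k)" for z
    unfolding r_coset_def by auto
  have "U #> x [^] k \<subseteq> carrier G" for k :: nat
    using r_coset_subset_G[OF U_carrier nat_pow_closed[OF x]] .
  then show "(\<Union>k<n. U #> x [^] k) \<subseteq> carrier G" by (intro UN_least)
  have "U #> x [^] (0::nat) = U" using U_carrier by simp
  then show "\<one> \<in> (\<Union>k<n. U #> x [^] k)"
    using subgroup.one_closed[OF U_subgroup] \<open>0 < n\<close> by blast
  fix y z assume "y \<in> (\<Union>k<n. U #> x [^] k)" and "z \<in> (\<Union>k<n. U #> x [^] k)"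
  then obtain u v i j where u: "u \<in> U" and v: "v \<in> U" and "i < n" "j < n"
    and y: "y = u \<otimes> x [^] i" and z: "z = v \<otimes> x [^] j"
    unfolding mem by blast
  define w where "w = u \<otimes> (x [^] i \<otimes> v \<otimes> inv (x [^] i))"
  have "x [^] i \<otimes> v \<otimes> inv (x [^] i) \<in> U"
    using normal.inv_op_closed2[OF U _ v] x by simp
  then have w: "w \<in> U" unfolding w_def using subgroup.m_closed[OF U_subgroup u] by blast
  have [simp]: "u \<in> carrier G" "v \<in> carrier G" using u v U_carrier by auto
  have yz: "y \<otimes> z = w \<otimes> x [^] (i + j)"
    unfolding y z w_def using x by (simp add: m_assoc nat_pow_mult[symmetric])
  show "y \<otimes> z \<in> (\<Union>k<n. U #> x [^] k)"
  proof (cases "i + j < n")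
    case True
    then show ?thesis using yz w mem by blast
  next
    case False
    then have "i + j = n + (i + j - n)" and "i + j - n < n" using \<open>i < n\<close> \<open>j < n\<close> by auto
    then have "x [^] (i + j) = x [^] n \<otimes> x [^] (i + j - n)"
      using x by (metis nat_pow_mult)
    then have "y \<otimes> z = (w \<otimes> x [^] n) \<otimes> x [^] (i + j - n)"
      using yz w U_carrier x by (simp add: m_assoc subsetD)
    moreover have "w \<otimes> x [^] n \<in> U"
      using subgroup.m_closed[OF U_subgroup w x_pow] .
    ultimately show ?thesis using \<open>i + j - n < n\<close> mem by blast
  qed
qed

lemma (in group) cyclic_extension:
  fixes n :: nat
  assumes "finite (carrier G)" and U: "U \<lhd> G" and H: "subgroup H G" and "U \<subseteq> H"
    and x: "x \<in> H" and x_pow: "x [^] n \<in> U" and "0 < n"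
    and central: "\<forall>y\<in>H. \<forall>g\<in>carrier G. commutator G y g \<in> U"
  shows "\<exists>N. N \<lhd> G \<and> U \<subseteq> N \<and> N \<subseteq> H \<and> x \<in> N \<and> card N \<le> n * card U"
proof -
  define N where "N = (\<Union>k<n. U #> x [^] k)"
  have U_subgroup: "subgroup U G" using U by (rule normal_imp_subgroup)
  have x_carrier: "x \<in> carrier G" using subgroup.mem_carrier[OF H x] .
  have U_carrier: "U \<subseteq> carrier G" using subgroup.subset[OF U_subgroup] .
  have "U #> x [^] (0::nat) = U" using U_carrier by simp
  then have "U \<subseteq> N" unfolding N_def using \<open>0 < n\<close> by blast
  have "U #> x [^] k \<subseteq> H" for k :: nat
    unfolding r_coset_def
    using \<open>U \<subseteq> H\<close> subgroup.m_closed[OF H _ subgroup_nat_pow_closed[OF H x]] by blast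
  then have "N \<subseteq> H" unfolding N_def by (intro UN_least)
  have "x \<in> N"
  proof (cases "n = 1")
    case True
    then show ?thesis using x_pow x_carrier \<open>U \<subseteq> N\<close> by auto
  next
    case False
    then have "x \<in> U #> x [^] (1::nat)"
      using rcos_self[OF _ U_subgroup] x_carrier by simp
    then show ?thesis unfolding N_def using False \<open>0 < n\<close> by (intro UN_I[of 1]) auto
  qed
  have "N \<lhd> G"
    using subgroup_UN_rcos_pow[OF assms(1) U x_carrier x_pow \<open>0 < n\<close>] \<open>U \<subseteq> N\<close> \<open>N \<subseteq> H\<close> central
    unfolding N_def[symmetric] by (rule normal_if_commutators_in)
  moreover have "card N \<le> n * card U"
  proof -
    have "card N \<le> (\<Sum>k<n. card (U #> x [^] k))"
      unfolding N_def by (rule card_UN_le) simp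
    also have "\<dots> \<le> (\<Sum>k<n. card U)"
    proof (rule sum_mono)
      fix k :: nat
      have "U #> x [^] k = (\<lambda>u. u \<otimes> x [^] k) ` U" unfolding r_coset_def by blast
      then show "card (U #> x [^] k) \<le> card U"
        using finite_subset[OF U_carrier assms(1)] by (simp add: card_image_le)
    qed
    finally show ?thesis by simp
  qed
  ultimately show ?thesis using \<open>U \<subseteq> N\<close> \<open>N \<subseteq> H\<close> \<open>x \<in> N\<close> by blast
qed

section \<open>Actions of \<open>p\<close>-groups\<close>

lemma (in group_action) prime_dvd_card_orbit:
  assumes "Factorial_Ring.prime p" and order: "order G = p ^ a"
    and "x \<in> E" and "g \<in> carrier G" and "\<phi> g x \<noteq> x"
  shows "p dvd card (orbit G \<phi> x)"
proof -
  have "card (carrier G) \<noteq> 0"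
    using order prime_gt_0_nat[OF assms(1)] unfolding order_def by simp
  then have "finite (carrier G)" by (meson card.infinite)
  moreover have "orbit G \<phi> x = (\<lambda>g. \<phi> g x) ` carrier G" unfolding orbit_def by blast
  ultimately have "finite (orbit G \<phi> x)" by simp
  moreover have "{x, \<phi> g x} \<subseteq> orbit G \<phi> x"
    using orbit_refl[OF \<open>x \<in> E\<close>] \<open>g \<in> carrier G\<close> unfolding orbit_def by blast
  ultimately have "card {x, \<phi> g x} \<le> card (orbit G \<phi> x)"
    by (rule card_mono)
  then have "card (orbit G \<phi> x) \<noteq> 1" using \<open>\<phi> g x \<noteq> x\<close> by simp
  have "card (orbit G \<phi> x) * card (stabilizer G \<phi> x) = p ^ a"
    using orbit_stabilizer_theorem[OF \<open>x \<in> E\<close>] order by simp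
  then have "card (orbit G \<phi> x) dvd p ^ a"
    by (metis dvd_triv_left)
  then obtain i where "card (orbit G \<phi> x) = p ^ i"
    using divides_primepow_nat[OF assms(1)] by blast
  then show ?thesis using \<open>card (orbit G \<phi> x) \<noteq> 1\<close> by (cases i) auto
qed

lemma (in group_action) card_mod_prime_eq_card_fixed_points:
  assumes "Factorial_Ring.prime p" and order: "order G = p ^ a"
    and "finite S" and "S \<subseteq> E" and stable: "\<And>g x. g \<in> carrier G \<Longrightarrow> x \<in> S \<Longrightarrow> \<phi> g x \<in> S"
  shows "card S mod p = card {x \<in> S. \<forall>g\<in>carrier G. \<phi> g x = x} mod p"
proof -
  define Y where "Y = {x \<in> S. \<exists>g\<in>carrier G. \<phi> g x \<noteq> x}"
  have "finite Y" using \<open>finite S\<close> unfolding Y_def by simp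
  have orbit_Y: "orbit G \<phi> x \<subseteq> Y" if x: "x \<in> Y" for x
  proof
    fix y assume y: "y \<in> orbit G \<phi> x"
    then obtain h where h: "h \<in> carrier G" and y_def: "y = \<phi> h x"
      unfolding orbit_def by blast
    have "x \<in> S" using x unfolding Y_def by blast
    then have "y \<in> S" using stable h y_def by blast
    moreover have "\<exists>g\<in>carrier G. \<phi> g y \<noteq> y"
    proof (rule ccontr)
      assume fixed: "\<not> (\<exists>g\<in>carrier G. \<phi> g y \<noteq> y)"
      moreover have "x \<in> orbit G \<phi> y"
        using orbit_sym \<open>x \<in> S\<close> \<open>y \<in> S\<close> \<open>S \<subseteq> E\<close> y by blast
      ultimately have "x = y" unfolding orbit_def by auto
      then show False using x fixed unfolding Y_def by blast
    qed
    ultimately show "y \<in> Y" unfolding Y_def by blast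
  qed
  have Y_union: "Y = \<Union> (orbit G \<phi> ` Y)"
    using orbit_Y orbit_refl \<open>S \<subseteq> E\<close> unfolding Y_def by blast
  have "pairwise disjnt (orbit G \<phi> ` Y)"
  proof (rule pairwiseI)
    fix O1 O2 assume "O1 \<in> orbit G \<phi> ` Y" "O2 \<in> orbit G \<phi> ` Y" "O1 \<noteq> O2"
    moreover have "orbit G \<phi> ` Y \<subseteq> orbits G E \<phi>"
      using \<open>S \<subseteq> E\<close> unfolding orbits_def Y_def by blast
    ultimately show "disjnt O1 O2"
      using disjoint_union unfolding disjnt_def by blast
  qed
  then have "card Y = sum card (orbit G \<phi> ` Y)"
    using finite_subset[OF orbit_Y \<open>finite Y\<close>] by (subst Y_union) (auto intro!: card_Union_disjoint)
  also have "p dvd \<dots>"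
  proof (rule dvd_sum)
    fix Orb assume "Orb \<in> orbit G \<phi> ` Y"
    then obtain x g where "Orb = orbit G \<phi> x" "x \<in> S" "g \<in> carrier G" "\<phi> g x \<noteq> x"
      unfolding Y_def by blast
    then show "p dvd card Orb"
      using prime_dvd_card_orbit[OF assms(1) order] \<open>S \<subseteq> E\<close> by blast
  qed
  finally obtain k where k: "card Y = p * k" by (rule dvdE)
  have "card S = card ({x \<in> S. \<forall>g\<in>carrier G. \<phi> g x = x} \<union> Y)"
    unfolding Y_def by (rule arg_cong[where f = card]) blast
  also have "\<dots> = card {x \<in> S. \<forall>g\<in>carrier G. \<phi> g x = x} + card Y"
    using \<open>finite S\<close> \<open>finite Y\<close> by (intro card_Un_disjoint) (auto simp: Y_def)
  finally show ?thesis using k by simp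
qed

lemma (in group_action) exists_other_fixed_point:
  assumes "Factorial_Ring.prime p" and "order G = p ^ a"
    and "finite S" and "S \<subseteq> E" and "\<And>g x. g \<in> carrier G \<Longrightarrow> x \<in> S \<Longrightarrow> \<phi> g x \<in> S"
    and "p dvd card S" and "x0 \<in> S" and fixed: "\<And>g. g \<in> carrier G \<Longrightarrow> \<phi> g x0 = x0"
  shows "\<exists>x\<in>S. x \<noteq> x0 \<and> (\<forall>g\<in>carrier G. \<phi> g x = x)"
proof -
  define Fix where "Fix = {x \<in> S. \<forall>g\<in>carrier G. \<phi> g x = x}"
  have "card Fix mod p = 0"
    using card_mod_prime_eq_card_fixed_points[OF assms(1-5)] \<open>p dvd card S\<close> unfolding Fix_def by simp
  then have "p dvd card Fix" by (rule mod_0_imp_dvd)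
  moreover have "x0 \<in> Fix" unfolding Fix_def using \<open>x0 \<in> S\<close> fixed by blast
  moreover have "finite Fix" using \<open>finite S\<close> unfolding Fix_def by simp
  ultimately have "p \<le> card Fix"
    using dvd_imp_le card_gt_0_iff by (metis empty_iff)
  then have "\<not> Fix \<subseteq> {x0}"
    using card_mono[of "{x0}" Fix] prime_ge_2_nat[OF assms(1)] by auto
  then show ?thesis unfolding Fix_def by blast
qed

locale finite_p_group = group G for G (structure) +
  fixes p :: nat
  assumes prime_p: "Factorial_Ring.prime p"
    and finite_carrier: "finite (carrier G)"
    and order_p_power: "\<exists>a. order G = p ^ a"
begin

lemma two_le_p: "2 \<le> p"
  using prime_p prime_ge_2_nat by blast

lemma finite_subgroup: "subgroup K G \<Longrightarrow> finite K"
  using finite_carrier finite_subset subgroup.subset by blast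

lemma card_subgroup_pos: "subgroup K G \<Longrightarrow> 0 < card K"
  using finite_carrier subgroup.finite_imp_card_positive by blast

lemma card_subgroup_p_power:
  assumes "subgroup K G"
  shows "\<exists>j. card K = p ^ j"
proof -
  obtain a where "order G = p ^ a" using order_p_power by blast
  moreover have "card K dvd order G" using lagrange[OF assms] by (metis dvd_triv_right)
  ultimately show ?thesis using divides_primepow_nat[OF prime_p] by auto
qed

lemma card_proper_subgroup:
  assumes "subgroup K G" and "subgroup H G" and "K \<subset> H"
  shows "p * card K \<le> card H"
proof -
  obtain j s where j: "card K = p ^ j" and s: "card H = p ^ s"
    using card_subgroup_p_power assms(1,2) by metis
  have "card K < card H"
    using psubset_card_mono[OF finite_subgroup[OF assms(2)] assms(3)] .
  then have "j < s" using j s two_le_p by (simp add: power_strict_increasing_iff)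
  then have "p * p ^ j \<le> p ^ s"
    using two_le_p by (metis Suc_leI power_Suc power_increasing Suc_1 le_trans one_le_numeral)
  then show ?thesis using j s by simp
qed

text \<open>A proper subgroup of \<open>H\<close> has at most \<open>|H|/p\<close> elements, and all of them share \<open>\<one>\<close>.\<close>

lemma not_covered_by_proper_subgroups:
  assumes H: "subgroup H G" and "finite \<K>" and "card \<K> \<le> p"
    and proper: "\<And>K. K \<in> \<K> \<Longrightarrow> subgroup K G \<and> K \<subset> H"
  shows "\<exists>x\<in>H. \<forall>K\<in>\<K>. x \<notin> K"
proof (cases "\<K> = {}")
  case True
  then show ?thesis using subgroup.one_closed[OF H] by blast
next
  case False
  then obtain K0 where K0: "K0 \<in> \<K>" by blast
  define c where "c = card H div p"
  have card_K: "card K \<le> c" if "K \<in> \<K>" for K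
  proof -
    have "p * card K \<le> card H" using card_proper_subgroup proper[OF that] H by blast
    then have "p * card K div p \<le> card H div p" by (rule div_le_mono)
    then show ?thesis unfolding c_def using two_le_p by simp
  qed
  have "0 < c" using card_K[OF K0] card_subgroup_pos proper[OF K0] by fastforce
  have "(\<Sum>K\<in>\<K>. card K - 1) \<le> (\<Sum>K\<in>\<K>. c - 1)"
    using card_K by (intro sum_mono diff_le_mono)
  also have "\<dots> \<le> p * (c - 1)" using \<open>card \<K> \<le> p\<close> by simp
  finally have sum_le: "(\<Sum>K\<in>\<K>. card K - 1) \<le> p * (c - 1)" .
  have "card (\<Union>\<K>) \<le> Suc (\<Sum>K\<in>\<K>. card K - 1)"
    using \<open>finite \<K>\<close> proper finite_subgroup by (intro card_Union_subgroups_le) auto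
  moreover have "p * c = p * (c - 1) + p" using \<open>0 < c\<close> by (cases c) simp_all
  moreover have "p * c \<le> card H" unfolding c_def by simp
  ultimately have "card (\<Union>\<K>) < card H" using sum_le two_le_p by linarith
  moreover have "finite (\<Union>\<K>)" using \<open>finite \<K>\<close> proper finite_subgroup by blast
  ultimately have "\<not> H \<subseteq> \<Union>\<K>"
    using card_mono[of "\<Union>\<K>" H] by linarith
  then show ?thesis by blast
qed

lemma not_covered_by_family:
  assumes H: "subgroup H G" and "finite I" and "card I \<le> p"
    and proper: "\<And>i. i \<in> I \<Longrightarrow> subgroup (K i) G \<and> K i \<subset> H"
  shows "\<not> H \<subseteq> (\<Union>i\<in>I. K i)"
proof -
  have "card (K ` I) \<le> p" using card_image_le[OF \<open>finite I\<close>, of K] \<open>card I \<le> p\<close> by simp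
  moreover have "finite (K ` I)" using \<open>finite I\<close> by simp
  moreover have "subgroup K' G \<and> K' \<subset> H" if "K' \<in> K ` I" for K' using that proper by blast
  ultimately obtain x where "x \<in> H" "\<forall>K'\<in>K ` I. x \<notin> K'"
    using not_covered_by_proper_subgroups[OF H] by metis
  then show ?thesis by blast
qed

lemma prime_dvd_card_cosets:
  assumes W: "subgroup W G" and H: "subgroup H G" and "W \<subset> H"
  shows "p dvd card ((\<lambda>y. W #> y) ` H)"
proof -
  have index: "card ((\<lambda>y. W #> y) ` H) * card W = card H"
    using card_cosets_in_subgroup[OF W H] \<open>W \<subset> H\<close> by blast
  moreover obtain s where "card H = p ^ s" using card_subgroup_p_power[OF H] by blast
  ultimately have "card ((\<lambda>y. W #> y) ` H) dvd p ^ s" by (metis dvd_triv_left)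
  then obtain i where i: "card ((\<lambda>y. W #> y) ` H) = p ^ i"
    using divides_primepow_nat[OF prime_p] by blast
  have "card W < card H"
    using psubset_card_mono[OF finite_subgroup[OF H] \<open>W \<subset> H\<close>] .
  then have "card ((\<lambda>y. W #> y) ` H) \<noteq> 1" using index by auto
  then show ?thesis using i by (cases i) auto
qed

text \<open>\<open>G\<close> permutes the cosets of \<open>W\<close> in \<open>H\<close> by conjugation; there are a multiple of \<open>p\<close> of
  them, so besides \<open>W\<close> itself at least \<open>p - 1\<close> further cosets are fixed.\<close>

lemma exists_fixed_coset:
  assumes W: "W \<lhd> G" and H: "H \<lhd> G" and "W \<subset> H"
  shows "\<exists>h\<in>H - W. \<forall>g\<in>carrier G. W #> (g \<otimes> h \<otimes> inv g) = W #> h"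
proof -
  define \<phi> where "\<phi> = (\<lambda>g. \<lambda>S\<in>{S. S \<subseteq> carrier G}. g <# S #> inv g)"
  interpret conj: group_action G "{S. S \<subseteq> carrier G}" \<phi>
    unfolding \<phi>_def by (rule action_by_conjugation_on_power_set)
  have W_subgroup: "subgroup W G" and H_subgroup: "subgroup H G"
    using W H by (simp_all add: normal_imp_subgroup)
  have W_carrier: "W \<subseteq> carrier G" and H_carrier: "H \<subseteq> carrier G"
    using subgroup.subset[OF W_subgroup] subgroup.subset[OF H_subgroup] .
  have \<phi>_coset: "\<phi> g (W #> y) = W #> (g \<otimes> y \<otimes> inv g)" if "g \<in> carrier G" "y \<in> carrier G" for g y
    using conj_rcos[OF W that] r_coset_subset_G[OF W_carrier that(2)] unfolding \<phi>_def by simp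
  define Cos where "Cos = (\<lambda>y. W #> y) ` H"
  have "finite Cos" unfolding Cos_def using finite_subgroup[OF H_subgroup] by simp
  have Cos_sub: "Cos \<subseteq> {S. S \<subseteq> carrier G}"
    unfolding Cos_def using r_coset_subset_G[OF W_carrier] H_carrier by blast
  have Cos_stable: "\<phi> g S \<in> Cos" if "g \<in> carrier G" "S \<in> Cos" for g S
  proof -
    obtain y where y: "y \<in> H" and S: "S = W #> y" using \<open>S \<in> Cos\<close> unfolding Cos_def by blast
    then have "\<phi> g S = W #> (g \<otimes> y \<otimes> inv g)" using \<phi>_coset that(1) H_carrier by blast
    then show ?thesis unfolding Cos_def using normal.inv_op_closed2[OF H that(1) y] by blast
  qed
  have W_coset: "W #> \<one> = W" using W_carrier by simp
  then have W_in: "W \<in> Cos"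
    unfolding Cos_def using subgroup.one_closed[OF H_subgroup] by (intro image_eqI[of W _ \<one>]) auto
  have W_fixed: "\<phi> g W = W" if "g \<in> carrier G" for g
    using \<phi>_coset[OF that one_closed] that W_coset by simp
  obtain a where order: "order G = p ^ a" using order_p_power by blast
  have "p dvd card Cos"
    unfolding Cos_def using prime_dvd_card_cosets[OF W_subgroup H_subgroup \<open>W \<subset> H\<close>] .
  from conj.exists_other_fixed_point[OF prime_p order \<open>finite Cos\<close> Cos_sub Cos_stable this W_in W_fixed]
  obtain S where "S \<in> Cos" "S \<noteq> W" and fixed: "\<forall>g\<in>carrier G. \<phi> g S = S"
    by blast
  then obtain h where h: "h \<in> H" and S: "S = W #> h" unfolding Cos_def by blast
  have "h \<notin> W" using \<open>S \<noteq> W\<close> S subgroup.rcos_const[OF W_subgroup is_group] by blast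
  moreover have "W #> (g \<otimes> h \<otimes> inv g) = W #> h" if "g \<in> carrier G" for g
  proof -
    have "\<phi> g (W #> h) = W #> h" using fixed that S by blast
    then show ?thesis using \<phi>_coset[OF that] h H_carrier by auto
  qed
  ultimately show ?thesis using h by blast
qed

lemma exists_central_element:
  assumes W: "W \<lhd> G" and H: "H \<lhd> G" and "W \<subset> H"
  shows "\<exists>h\<in>H - W. \<forall>g\<in>carrier G. commutator G h g \<in> W"
proof -
  obtain h where h: "h \<in> H - W" and fixed: "\<forall>g\<in>carrier G. W #> (g \<otimes> h \<otimes> inv g) = W #> h"
    using exists_fixed_coset[OF W H \<open>W \<subset> H\<close>] by blast
  have W_subgroup: "subgroup W G" using W by (rule normal_imp_subgroup)
  have h_carrier: "h \<in> carrier G"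
    using h subgroup.mem_carrier[OF normal_imp_subgroup[OF H]] by blast
  have "commutator G h g \<in> W" if g: "g \<in> carrier G" for g
  proof -
    have "inv g \<otimes> h \<otimes> g \<in> W #> (inv g \<otimes> h \<otimes> g)"
      using rcos_self[OF _ W_subgroup] g h_carrier by simp
    also have "W #> (inv g \<otimes> h \<otimes> g) = W #> h"
      using fixed g by (metis inv_closed inv_inv)
    finally have "inv g \<otimes> h \<otimes> g \<otimes> inv h \<in> W"
      by (rule subgroup.rcos_module_imp[OF W_subgroup is_group h_carrier])
    then have "inv h \<otimes> (inv g \<otimes> h \<otimes> g \<otimes> inv h) \<otimes> h \<in> W"
      by (rule normal.inv_op_closed1[OF W h_carrier])
    then show ?thesis
      unfolding commutator_def using g h_carrier by (simp add: m_assoc)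
  qed
  then show ?thesis using h by blast
qed

lemma exists_pow_boundary:
  assumes W: "subgroup W G" and h: "h \<in> carrier G" and "h \<notin> W"
  shows "\<exists>j. h [^] (p ^ j) \<notin> W \<and> (h [^] (p ^ j)) [^] p \<in> W"
proof -
  obtain a where "order G = p ^ a" using order_p_power by blast
  then have "h [^] (p ^ a) \<in> W"
    using pow_order_eq_1[OF h] subgroup.one_closed[OF W] by simp
  then have ex: "\<exists>j. h [^] (p ^ j) \<in> W" by blast
  define j0 where "j0 = (LEAST j. h [^] (p ^ j) \<in> W)"
  have "h [^] (p ^ j0) \<in> W" unfolding j0_def using LeastI_ex[OF ex] .
  moreover have "j0 \<noteq> 0"
  proof
    assume "j0 = 0"
    then show False using \<open>h [^] (p ^ j0) \<in> W\<close> \<open>h \<notin> W\<close> h by simp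
  qed
  then obtain k where k: "j0 = Suc k" using not0_implies_Suc by blast
  then have "h [^] (p ^ k) \<notin> W"
    using not_less_Least[of k "\<lambda>j. h [^] (p ^ j) \<in> W"] unfolding j0_def by simp
  moreover have "(h [^] (p ^ k)) [^] p = h [^] (p ^ j0)"
    using h k by (simp add: nat_pow_pow mult.commute)
  ultimately show ?thesis by auto
qed

end

section \<open>Central subgroups of index \<open>p\<close>\<close>

text \<open>\<open>H/W\<close> is a central subgroup of order \<open>p\<close> of \<open>G/W\<close>.\<close>

definition central_index_p :: "('a, 'b) monoid_scheme \<Rightarrow> nat \<Rightarrow> 'a set \<Rightarrow> 'a set \<Rightarrow> bool" where
  "central_index_p G p W H \<longleftrightarrow> W \<lhd> G \<and> W \<subseteq> H \<and> card H = p * card W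
     \<and> (\<forall>y\<in>H. \<forall>g\<in>carrier G. commutator G y g \<in> W)"

context finite_p_group
begin

lemma central_index_p_psubset:
  assumes "central_index_p G p W H"
  shows "subgroup W G \<and> W \<subset> H"
proof -
  have W: "W \<lhd> G" "W \<subseteq> H" "card H = p * card W"
    using assms unfolding central_index_p_def by auto
  have "subgroup W G" using W(1) by (rule normal_imp_subgroup)
  moreover have "card W < card H"
    using card_subgroup_pos[OF \<open>subgroup W G\<close>] W(3) two_le_p by simp
  ultimately show ?thesis using W(2) by auto
qed

lemma central_index_p_if_maximal:
  assumes W: "W \<lhd> G" and H: "H \<lhd> G" and "W \<subset> H"
    and maximal: "\<And>K. K \<lhd> G \<Longrightarrow> W \<subseteq> K \<Longrightarrow> K \<subseteq> H \<Longrightarrow> K \<noteq> W \<Longrightarrow> K = H"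
  shows "central_index_p G p W H"
proof -
  have W_subgroup: "subgroup W G" and H_subgroup: "subgroup H G"
    using W H by (simp_all add: normal_imp_subgroup)
  obtain h where h: "h \<in> H - W" and h_central: "\<forall>g\<in>carrier G. commutator G h g \<in> W"
    using exists_central_element[OF W H \<open>W \<subset> H\<close>] by blast
  define F where "F = centralizer_mod G W H (carrier G)"
  have "F \<lhd> G" unfolding F_def using centralizer_mod_normal[OF finite_carrier W H normal_self] .
  moreover have "W \<subseteq> F" unfolding F_def using subset_centralizer_mod_self W \<open>W \<subset> H\<close> by blast
  moreover have "F \<subseteq> H" unfolding F_def centralizer_mod_def by blast
  moreover have "h \<in> F" unfolding F_def centralizer_mod_def using h h_central by blast
  then have "F \<noteq> W" using h by blast
  ultimately have "F = H" by (rule maximal)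
  then have central: "\<forall>y\<in>H. \<forall>g\<in>carrier G. commutator G y g \<in> W"
    unfolding F_def centralizer_mod_def by blast
  have h_carrier: "h \<in> carrier G" using h subgroup.mem_carrier[OF H_subgroup] by blast
  obtain j where x_notin: "h [^] (p ^ j) \<notin> W" and x_pow: "(h [^] (p ^ j)) [^] p \<in> W"
    using exists_pow_boundary[OF W_subgroup h_carrier] h by blast
  have "h [^] (p ^ j) \<in> H"
    using subgroup_nat_pow_closed[OF H_subgroup] h by blast
  moreover have "W \<subseteq> H" "0 < p" using \<open>W \<subset> H\<close> two_le_p by auto
  ultimately obtain K where K: "K \<lhd> G" "W \<subseteq> K" "K \<subseteq> H" "h [^] (p ^ j) \<in> K"
    and card_K: "card K \<le> p * card W"
    using cyclic_extension[OF finite_carrier W H_subgroup _ _ x_pow _ central] by blast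
  have "K = H" using maximal[OF K(1-3)] K(4) x_notin by blast
  then have "card H \<le> p * card W" using card_K by simp
  moreover have "p * card W \<le> card H"
    using card_proper_subgroup[OF W_subgroup H_subgroup \<open>W \<subset> H\<close>] .
  ultimately have "card H = p * card W" by simp
  then show ?thesis
    unfolding central_index_p_def using W \<open>W \<subset> H\<close> central by blast
qed

lemma exists_central_index_p:
  assumes C: "C \<lhd> G" and H: "H \<lhd> G" and "C \<subset> H"
  shows "\<exists>W. C \<subseteq> W \<and> central_index_p G p W H"
proof -
  define \<W> where "\<W> = {W. W \<lhd> G \<and> C \<subseteq> W \<and> W \<subset> H}"
  have "\<W> \<subseteq> Pow (carrier G)"
    unfolding \<W>_def using subgroup.subset[OF normal_imp_subgroup[OF H]] by blast
  then have "finite \<W>" using finite_carrier by (simp add: finite_subset)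
  moreover have "C \<in> \<W>" unfolding \<W>_def using C \<open>C \<subset> H\<close> by blast
  ultimately obtain W where "W \<in> \<W>" and W_max: "\<forall>W'\<in>\<W>. W \<subseteq> W' \<longrightarrow> W = W'"
    using finite_has_maximal2 by blast
  then have W: "W \<lhd> G" and "C \<subseteq> W" and "W \<subset> H" unfolding \<W>_def by auto
  have "K = H" if "K \<lhd> G" "W \<subseteq> K" "K \<subseteq> H" "K \<noteq> W" for K
  proof (rule ccontr)
    assume "K \<noteq> H"
    then have "K \<in> \<W>" unfolding \<W>_def using that \<open>C \<subseteq> W\<close> by blast
    then show False using W_max that(2,4) by blast
  qed
  then have "central_index_p G p W H"
    using central_index_p_if_maximal[OF W H \<open>W \<subset> H\<close>] by blast
  then show ?thesis using \<open>C \<subseteq> W\<close> by blast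
qed

lemma subgroup_eq_if_card_le:
  assumes U: "subgroup U G" and K: "subgroup K G" and N: "subgroup N G"
    and "U \<subseteq> K" and "K \<subset> N" and "card N \<le> p * card U"
  shows "K = U"
proof -
  have "p * card K \<le> p * card U"
    using card_proper_subgroup[OF K N \<open>K \<subset> N\<close>] \<open>card N \<le> p * card U\<close> by (rule le_trans)
  then have "card K \<le> card U" using two_le_p by simp
  then show ?thesis using card_seteq[OF finite_subgroup[OF K] \<open>U \<subseteq> K\<close>] by simp
qed

lemma card_le_Int_central_index_p:
  assumes H: "subgroup H G" and W1: "central_index_p G p W1 H" and W2: "central_index_p G p W2 H"
  shows "card H \<le> p * (p * card (W1 \<inter> W2))"
proof -
  have "W1 \<subseteq> H" "card H = p * card W1" "W2 \<subseteq> H" "card H = p * card W2"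
    using W1 W2 unfolding central_index_p_def by auto
  have W1_subgroup: "subgroup W1 G" and W2_subgroup: "subgroup W2 G"
    using central_index_p_psubset[OF W1] central_index_p_psubset[OF W2] by auto
  have "card W1 * card (H \<inter> W2) \<le> card H * card (W1 \<inter> W2)"
    by (rule index_Int_mono[OF finite_carrier W1_subgroup H W2_subgroup \<open>W1 \<subseteq> H\<close>])
  moreover have "H \<inter> W2 = W2" using \<open>W2 \<subseteq> H\<close> by blast
  moreover have "card W2 = card W1"
    using \<open>card H = p * card W1\<close> \<open>card H = p * card W2\<close> two_le_p by simp
  ultimately have "card W1 * card W1 \<le> card W1 * (p * card (W1 \<inter> W2))"
    using \<open>card H = p * card W1\<close> by (simp add: ac_simps)
  then have "card W1 \<le> p * card (W1 \<inter> W2)"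
    using card_subgroup_pos[OF W1_subgroup] by simp
  then show ?thesis using \<open>card H = p * card W1\<close> by simp
qed

text \<open>The witness is \<open>N = (W\<^sub>1 \<inter> W\<^sub>2)\<langle>x\<rangle>\<close>.\<close>

lemma exists_normal_subgroup_through:
  assumes H: "H \<lhd> G" and W1: "central_index_p G p W1 H" and W2: "central_index_p G p W2 H"
    and x: "x \<in> H" "x \<notin> W1" "x \<notin> W2"
  shows "\<exists>N. N \<lhd> G \<and> N \<subseteq> H \<and> x \<in> N \<and> card H \<le> p * card N \<and> N \<inter> W2 \<subseteq> W1"
proof -
  have H_subgroup: "subgroup H G" using H by (rule normal_imp_subgroup)
  have "W1 \<lhd> G" "W1 \<subseteq> H" "card H = p * card W1"
    and central1: "\<forall>y\<in>H. \<forall>g\<in>carrier G. commutator G y g \<in> W1"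
    using W1 unfolding central_index_p_def by auto
  have "W2 \<lhd> G" "W2 \<subseteq> H" "card H = p * card W2"
    and central2: "\<forall>y\<in>H. \<forall>g\<in>carrier G. commutator G y g \<in> W2"
    using W2 unfolding central_index_p_def by auto
  define U where "U = W1 \<inter> W2"
  have U: "U \<lhd> G" unfolding U_def using normal_subgroup_intersect[OF \<open>W1 \<lhd> G\<close> \<open>W2 \<lhd> G\<close>] .
  have U_subgroup: "subgroup U G" using U by (rule normal_imp_subgroup)
  have "U \<subseteq> H" unfolding U_def using \<open>W1 \<subseteq> H\<close> by blast
  have central: "\<forall>y\<in>H. \<forall>g\<in>carrier G. commutator G y g \<in> U"
    unfolding U_def using central1 central2 by blast
  have finite_H: "finite H" using finite_subgroup[OF H_subgroup] .
  have "x [^] p \<in> U"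
    unfolding U_def
    using pow_index_mem[OF \<open>W1 \<lhd> G\<close> H_subgroup \<open>W1 \<subseteq> H\<close> finite_H \<open>card H = p * card W1\<close> x(1)]
      pow_index_mem[OF \<open>W2 \<lhd> G\<close> H_subgroup \<open>W2 \<subseteq> H\<close> finite_H \<open>card H = p * card W2\<close> x(1)]
    by blast
  moreover have "0 < p" using two_le_p by simp
  ultimately obtain N where N: "N \<lhd> G" "U \<subseteq> N" "N \<subseteq> H" "x \<in> N" and card_N: "card N \<le> p * card U"
    using cyclic_extension[OF finite_carrier U H_subgroup \<open>U \<subseteq> H\<close> x(1) _ _ central] by blast
  have N_subgroup: "subgroup N G" using N(1) by (rule normal_imp_subgroup)
  have W2_subgroup: "subgroup W2 G" using \<open>W2 \<lhd> G\<close> by (rule normal_imp_subgroup)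
  have "p * card U \<le> card N"
    using card_proper_subgroup[OF U_subgroup N_subgroup] N(2,4) x(2) unfolding U_def by blast
  then have "card H \<le> p * card N"
    using card_le_Int_central_index_p[OF H_subgroup W1 W2] unfolding U_def[symmetric]
    by (meson le_trans mult_le_mono2)
  moreover have "N \<inter> W2 = U"
  proof (rule subgroup_eq_if_card_le[OF U_subgroup _ N_subgroup])
    show "subgroup (N \<inter> W2) G" using subgroups_Inter_pair[OF N_subgroup W2_subgroup] .
    show "U \<subseteq> N \<inter> W2" "N \<inter> W2 \<subset> N" using N(2,4) x(3) unfolding U_def by auto
  qed (rule card_N)
  then have "N \<inter> W2 \<subseteq> W1" unfolding U_def by blast
  ultimately show ?thesis using N by blast
qed

lemma exists_element_avoiding:
  assumes H: "H \<lhd> G" and "finite I" and "card I < p"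
    and W: "\<forall>i\<in>I. central_index_p G p (W i) H" and WD: "central_index_p G p WD H"
  shows "\<exists>x\<in>H. x \<notin> WD \<and> (\<forall>i\<in>I. x \<notin> W i)"
proof -
  have "card (insert WD (W ` I)) \<le> Suc (card (W ` I))"
    using \<open>finite I\<close> by (simp only: card_insert_if finite_imageI) simp
  also have "\<dots> \<le> p" using card_image_le[OF \<open>finite I\<close>, of W] \<open>card I < p\<close> by simp
  finally have "card (insert WD (W ` I)) \<le> p" .
  moreover have "subgroup K G \<and> K \<subset> H" if "K \<in> insert WD (W ` I)" for K
  proof -
    have "central_index_p G p K H" using that WD W by blast
    then show ?thesis by (rule central_index_p_psubset)
  qed
  moreover have "finite (insert WD (W ` I))" using \<open>finite I\<close> by simp
  ultimately obtain x where "x \<in> H" and "\<forall>K\<in>insert WD (W ` I). x \<notin> K"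
    using not_covered_by_proper_subgroups[OF normal_imp_subgroup[OF H]] by metis
  then show ?thesis by blast
qed

end

section \<open>The invariants \<open>b\<close> and \<open>cl\<^sub>f\<close>\<close>

context finite_p_group
begin

lemma b_fun_nonneg:
  assumes K: "subgroup K G" and g: "g \<in> carrier G"
  shows "0 \<le> b_fun G p K g"
proof -
  have KZ: "subgroup (K \<inter> centralizer_elt G g) G"
    using subgroups_Inter_pair[OF K centralizer_elt_subgroup[OF g]] .
  have "card (K \<inter> centralizer_elt G g) \<le> card K"
    using card_mono[OF finite_subgroup[OF K]] by blast
  moreover have "0 < card (K \<inter> centralizer_elt G g)" using card_subgroup_pos[OF KZ] .
  ultimately have "1 \<le> real (card K) / real (card (K \<inter> centralizer_elt G g))" by simp
  then show ?thesis
    unfolding b_fun_def using two_le_p by (subst zero_le_log_cancel_iff) auto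
qed

lemma b_fun_le_minus_one:
  assumes A: "subgroup A G" and L: "subgroup L G" and g: "g \<in> carrier G"
    and index: "p * card A * card (L \<inter> centralizer_elt G g) \<le> card L * card (A \<inter> centralizer_elt G g)"
  shows "b_fun G p A g \<le> b_fun G p L g - 1"
proof -
  define Cz where "Cz = centralizer_elt G g"
  have Cz: "subgroup Cz G" unfolding Cz_def using centralizer_elt_subgroup[OF g] .
  have pos: "0 < card A" "0 < card (A \<inter> Cz)" "0 < card L" "0 < card (L \<inter> Cz)"
    using card_subgroup_pos A L subgroups_Inter_pair[OF A Cz] subgroups_Inter_pair[OF L Cz] by auto
  have p: "1 < real p" using two_le_p by simp
  have "real (p * card A * card (L \<inter> Cz)) \<le> real (card L * card (A \<inter> Cz))"
    using index unfolding Cz_def by (simp only: of_nat_le_iff)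
  then have "real p * real (card A) * real (card (L \<inter> Cz)) \<le> real (card L) * real (card (A \<inter> Cz))"
    by simp
  then have "real (card A) / real (card (A \<inter> Cz)) \<le> real (card L) / real (card (L \<inter> Cz)) / real p"
    using pos p by (simp add: field_simps)
  moreover have "0 < real (card A) / real (card (A \<inter> Cz))" using pos by simp
  ultimately have "log (real p) (real (card A) / real (card (A \<inter> Cz)))
      \<le> log (real p) (real (card L) / real (card (L \<inter> Cz)) / real p)"
    using log_mono[OF p] by blast
  also have "\<dots> = log (real p) (real (card L) / real (card (L \<inter> Cz))) - 1"
    using pos p by (simp add: log_divide log_mult)
  finally show ?thesis unfolding b_fun_def Cz_def .
qed

text \<open>\<open>L'(L \<inter> Z(g))\<close> is a proper subgroup of \<open>L\<close>, as it misses \<open>l\<close>: moving an element of \<open>Z(g)\<close>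
  out of \<open>[g, l' c]\<close> only conjugates \<open>[g, l']\<close>.\<close>

lemma index_centralizer_drop:
  assumes H: "H \<lhd> G" and L: "L \<lhd> G" and L': "L' \<lhd> G" and "L' \<subseteq> L"
    and g: "g \<in> H" and l: "l \<in> L" and not_in: "commutator G g l \<notin> comm_subgroup G H L'"
  shows "p * card L' * card (L \<inter> centralizer_elt G g) \<le> card L * card (L' \<inter> centralizer_elt G g)"
proof -
  define Cz where "Cz = centralizer_elt G g"
  have g_carrier: "g \<in> carrier G"
    using subgroup.mem_carrier[OF normal_imp_subgroup[OF H] g] .
  have L_subgroup: "subgroup L G" and L'_subgroup: "subgroup L' G"
    using L L' by (simp_all add: normal_imp_subgroup)
  have LZ: "subgroup (L \<inter> Cz) G"
    unfolding Cz_def using subgroups_Inter_pair[OF L_subgroup centralizer_elt_subgroup[OF g_carrier]] .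
  define P where "P = L' <#> (L \<inter> Cz)"
  have P: "subgroup P G" unfolding P_def using mult_norm_subgroup[OF L' LZ] .
  have "P \<subseteq> L"
    unfolding P_def set_mult_def using \<open>L' \<subseteq> L\<close> subgroup.m_closed[OF L_subgroup] by blast
  moreover have "l \<notin> P"
  proof
    assume "l \<in> P"
    then obtain l' c where l': "l' \<in> L'" and c: "c \<in> L \<inter> Cz" and l_eq: "l = l' \<otimes> c"
      unfolding P_def set_mult_def by blast
    have l'_carrier: "l' \<in> carrier G" using subgroup.mem_carrier[OF L'_subgroup l'] .
    have c_carrier: "c \<in> carrier G" using subgroup.mem_carrier[OF LZ c] .
    have "c \<in> centralizer_elt G g" using c unfolding Cz_def by blast
    then have "commutator G g l = inv c \<otimes> commutator G g l' \<otimes> c"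
      unfolding l_eq by (rule commutator_mult_centralizer[OF g_carrier l'_carrier])
    moreover have "commutator G g l' \<in> comm_subgroup G H L'"
      using commutator_mem_comm_subgroup[OF g l'] .
    ultimately show False
      using not_in normal.inv_op_closed1[OF comm_subgroup_normal[OF H L'] c_carrier] by simp
  qed
  ultimately have "P \<subset> L" using l by blast
  then have "p * card P \<le> card L" by (rule card_proper_subgroup[OF P L_subgroup])
  have "L' \<inter> (L \<inter> Cz) = L' \<inter> Cz" using \<open>L' \<subseteq> L\<close> by blast
  then have product: "card P * card (L' \<inter> Cz) = card L' * card (L \<inter> Cz)"
    using card_set_mult_Int[OF finite_carrier L'_subgroup LZ] unfolding P_def by simp
  have "p * card L' * card (L \<inter> Cz) = p * card P * card (L' \<inter> Cz)"
    by (simp add: mult.assoc product)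
  also have "\<dots> \<le> card L * card (L' \<inter> Cz)"
    using \<open>p * card P \<le> card L\<close> by (rule mult_le_mono1)
  finally show ?thesis unfolding Cz_def .
qed

lemma b_fun_drop:
  assumes H: "H \<lhd> G" and L: "L \<lhd> G" and L': "L' \<lhd> G" and "L' \<subseteq> L"
    and g: "g \<in> H" and l: "l \<in> L" and not_in: "commutator G g l \<notin> comm_subgroup G H L'"
    and A: "subgroup A G" and "A \<subseteq> L'"
  shows "b_fun G p A g \<le> b_fun G p L g - 1"
proof -
  define Cz where "Cz = centralizer_elt G g"
  have g_carrier: "g \<in> carrier G"
    using subgroup.mem_carrier[OF normal_imp_subgroup[OF H] g] .
  have Cz: "subgroup Cz G" unfolding Cz_def using centralizer_elt_subgroup[OF g_carrier] .
  have L'_subgroup: "subgroup L' G" using L' by (rule normal_imp_subgroup)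
  have drop: "p * card L' * card (L \<inter> Cz) \<le> card L * card (L' \<inter> Cz)"
    unfolding Cz_def using index_centralizer_drop[OF H L L' \<open>L' \<subseteq> L\<close> g l not_in] .
  have mono: "card A * card (L' \<inter> Cz) \<le> card L' * card (A \<inter> Cz)"
    using index_Int_mono[OF finite_carrier A L'_subgroup Cz \<open>A \<subseteq> L'\<close>] .
  have "(p * card A * card (L \<inter> Cz)) * (card L' * card (L' \<inter> Cz))
      = (p * card L' * card (L \<inter> Cz)) * (card A * card (L' \<inter> Cz))" by (simp add: ac_simps)
  also have "\<dots> \<le> (card L * card (L' \<inter> Cz)) * (card L' * card (A \<inter> Cz))"
    using drop mono by (rule mult_le_mono)
  also have "\<dots> = (card L * card (A \<inter> Cz)) * (card L' * card (L' \<inter> Cz))" by (simp add: ac_simps)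
  finally have "p * card A * card (L \<inter> Cz) \<le> card L * card (A \<inter> Cz)"
    using card_subgroup_pos[OF L'_subgroup] card_subgroup_pos[OF subgroups_Inter_pair[OF L'_subgroup Cz]]
    by simp
  then show ?thesis
    using b_fun_le_minus_one[OF A normal_imp_subgroup[OF L] g_carrier] unfolding Cz_def by blast
qed

end

lemma F_class_normal:
  assumes "f \<in> F_class G" and "N \<lhd> G" and "1 \<le> i"
  shows "f N i \<lhd> G"
  using assms unfolding F_class_def by simp

lemma F_class_mono:
  assumes "f \<in> F_class G" and "N \<lhd> G" and "M \<lhd> G" and "N \<subseteq> M" and "1 \<le> j" and "j \<le> i"
  shows "f N i \<subseteq> f M j"
  using assms unfolding F_class_def by simp

lemma F_class_comm_subgroup_neq:
  assumes "f \<in> F_class G" and "N \<lhd> G" and "1 \<le> i" and "\<not> f N i \<subseteq> centralizer_set G N"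
  shows "comm_subgroup G N (f N i) \<noteq> comm_subgroup G N (f N (i + 1))"
  using assms unfolding F_class_def by simp

lemma cl_f_le: "1 \<le> m \<Longrightarrow> f N m \<subseteq> centralizer_set G N \<Longrightarrow> cl_f G f N \<le> m"
  unfolding cl_f_def by (rule Least_le) simp

section \<open>The descent\<close>

context finite_p_group
begin

lemma b_fun_F_class_drop:
  assumes f: "f \<in> F_class G" and "1 \<le> m" and H: "H \<lhd> G" and N: "N \<lhd> G" "N \<subseteq> H"
    and g: "g \<in> H" "g \<notin> centralizer_mod G (comm_subgroup G H (f H (m + 1))) H (f H m)"
  shows "b_fun G p (f N (m + 1)) g \<le> b_fun G p (f H m) g - 1"
proof -
  have L: "f H m \<lhd> G" and L': "f H (m + 1) \<lhd> G" and A: "f N (m + 1) \<lhd> G"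
    using F_class_normal[OF f] H N(1) \<open>1 \<le> m\<close> by auto
  have "f H (m + 1) \<subseteq> f H m" and "f N (m + 1) \<subseteq> f H (m + 1)"
    using F_class_mono[OF f] H N \<open>1 \<le> m\<close> by auto
  moreover obtain l where "l \<in> f H m" and "commutator G g l \<notin> comm_subgroup G H (f H (m + 1))"
    using g unfolding centralizer_mod_def by blast
  ultimately show ?thesis
    using b_fun_drop[OF H L L' _ g(1) _ _ normal_imp_subgroup[OF A]] by blast
qed

lemma centralizer_mod_F_class:
  assumes f: "f \<in> F_class G" and "1 \<le> m" and H: "H \<lhd> G"
    and noncentral: "\<not> f H m \<subseteq> centralizer_set G H"
  shows "centralizer_mod G (comm_subgroup G H (f H (m + 1))) H (f H m) \<lhd> G"
    and "centralizer_mod G (comm_subgroup G H (f H (m + 1))) H (f H m) \<subset> H"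
proof -
  have L: "f H m \<lhd> G" and L': "f H (m + 1) \<lhd> G"
    using F_class_normal[OF f H] \<open>1 \<le> m\<close> by auto
  have S: "comm_subgroup G H (f H (m + 1)) \<lhd> G" using comm_subgroup_normal[OF H L'] .
  show "centralizer_mod G (comm_subgroup G H (f H (m + 1))) H (f H m) \<lhd> G"
    using centralizer_mod_normal[OF finite_carrier S H L] .
  have "f H (m + 1) \<subseteq> f H m" using F_class_mono[OF f H H] \<open>1 \<le> m\<close> by simp
  then show "centralizer_mod G (comm_subgroup G H (f H (m + 1))) H (f H m) \<subset> H"
    using F_class_comm_subgroup_neq[OF f H \<open>1 \<le> m\<close> noncentral] S
    by (rule centralizer_mod_psubset)
qed

lemma exists_central_index_p_family:
  assumes H: "H \<lhd> G" and C: "\<And>i. i \<in> I \<Longrightarrow> C i \<lhd> G \<and> C i \<subset> H"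
  shows "\<exists>W. \<forall>i\<in>I. C i \<subseteq> W i \<and> central_index_p G p (W i) H"
proof -
  have "\<forall>i\<in>I. \<exists>W. C i \<subseteq> W \<and> central_index_p G p W H"
  proof
    fix i assume "i \<in> I"
    then have "C i \<lhd> G" "C i \<subset> H" using C by auto
    then show "\<exists>W. C i \<subseteq> W \<and> central_index_p G p W H"
      using exists_central_index_p[OF _ H] by blast
  qed
  then show ?thesis by (rule bchoice)
qed

lemma descent_step:
  assumes f: "f \<in> F_class G" and "finite I" and "card I < p" and "i0 \<in> I" and "1 \<le> m"
    and H: "H \<lhd> G" and C: "\<And>i. i \<in> I \<Longrightarrow> C i \<lhd> G \<and> C i \<subset> H"
    and bound: "\<And>g. g \<in> H - (\<Union>i\<in>I. C i) \<Longrightarrow> b_fun G p (f H m) g \<le> real n"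
    and noncentral: "\<not> f H m \<subseteq> centralizer_set G H"
  shows "0 < n \<and> (\<exists>N C'. N \<lhd> G \<and> N \<subseteq> H \<and> card H \<le> p * card N
            \<and> (\<forall>i\<in>I. C' i \<lhd> G \<and> C' i \<subset> N \<and> C i \<inter> N \<subseteq> C' i)
            \<and> (\<forall>g\<in>N - (\<Union>i\<in>I. C' i). b_fun G p (f N (m + 1)) g \<le> real n - 1))"
proof -
  define D where "D = centralizer_mod G (comm_subgroup G H (f H (m + 1))) H (f H m)"
  have "D \<lhd> G" and "D \<subset> H"
    unfolding D_def using centralizer_mod_F_class[OF f \<open>1 \<le> m\<close> H noncentral] by auto
  from exists_central_index_p[OF this(1) H this(2)]
  obtain WD where "D \<subseteq> WD" and WD: "central_index_p G p WD H" by blast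
  obtain W where W: "\<forall>i\<in>I. C i \<subseteq> W i \<and> central_index_p G p (W i) H"
    using exists_central_index_p_family[where C = C, OF H C] by blast
  have "\<forall>i\<in>I. central_index_p G p (W i) H" using W by blast
  from exists_element_avoiding[OF H \<open>finite I\<close> \<open>card I < p\<close> this WD]
  obtain x where x: "x \<in> H" "x \<notin> WD" "\<forall>i\<in>I. x \<notin> W i" by blast
  have L': "f H (m + 1) \<lhd> G" using F_class_normal[OF f H] \<open>1 \<le> m\<close> by simp
  have "x \<notin> D" using x(2) \<open>D \<subseteq> WD\<close> by blast
  then have "b_fun G p (f H (m + 1)) x \<le> b_fun G p (f H m) x - 1"
    unfolding D_def by (rule b_fun_F_class_drop[OF f \<open>1 \<le> m\<close> H H subset_refl x(1)])
  moreover have "0 \<le> b_fun G p (f H (m + 1)) x"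
    using b_fun_nonneg[OF normal_imp_subgroup[OF L'] subgroup.mem_carrier[OF normal_imp_subgroup[OF H] x(1)]] .
  moreover have "x \<in> H - (\<Union>i\<in>I. C i)" using x(1,3) W by blast
  then have "b_fun G p (f H m) x \<le> real n" by (rule bound)
  ultimately have "0 < n" by simp
  have W0: "central_index_p G p (W i0) H" and "x \<notin> W i0" using W x(3) \<open>i0 \<in> I\<close> by auto
  then obtain N where N: "N \<lhd> G" "N \<subseteq> H" "x \<in> N" "card H \<le> p * card N" and "N \<inter> WD \<subseteq> W i0"
    using exists_normal_subgroup_through[OF H W0 WD x(1) _ x(2)] by blast
  define C' where "C' i = W i \<inter> N" for i
  have "C' i \<lhd> G \<and> C' i \<subset> N \<and> C i \<inter> N \<subseteq> C' i" if "i \<in> I" for i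
  proof -
    have "W i \<lhd> G" "C i \<subseteq> W i" using W that unfolding central_index_p_def by auto
    then show ?thesis
      unfolding C'_def using normal_subgroup_intersect[OF _ N(1)] x(3) that N(3) by blast
  qed
  moreover have "b_fun G p (f N (m + 1)) g \<le> real n - 1" if g: "g \<in> N - (\<Union>i\<in>I. C' i)" for g
  proof -
    have "g \<in> H" and g_W: "\<forall>i\<in>I. g \<notin> W i" using g N(2) unfolding C'_def by auto
    have "g \<notin> D" using g \<open>D \<subseteq> WD\<close> \<open>N \<inter> WD \<subseteq> W i0\<close> \<open>i0 \<in> I\<close> unfolding C'_def by blast
    then have "b_fun G p (f N (m + 1)) g \<le> b_fun G p (f H m) g - 1"
      unfolding D_def by (rule b_fun_F_class_drop[OF f \<open>1 \<le> m\<close> H N(1,2) \<open>g \<in> H\<close>])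
    moreover have "g \<in> H - (\<Union>i\<in>I. C i)" using \<open>g \<in> H\<close> g_W W by blast
    then have "b_fun G p (f H m) g \<le> real n" by (rule bound)
    ultimately show ?thesis by simp
  qed
  ultimately show ?thesis using \<open>0 < n\<close> N by blast
qed

lemma exists_normal_subgroup_cl_f_le:
  assumes f: "f \<in> F_class G" and "finite I" and "card I < p" and "i0 \<in> I"
    and "1 \<le> m" and "H \<lhd> G" and "\<And>i. i \<in> I \<Longrightarrow> C i \<lhd> G \<and> C i \<subset> H"
    and "\<And>g. g \<in> H - (\<Union>i\<in>I. C i) \<Longrightarrow> b_fun G p (f H m) g \<le> real n"
  shows "\<exists>N. N \<lhd> G \<and> N \<subseteq> H \<and> card H \<le> p ^ n * card N \<and> cl_f G f N \<le> n + m
           \<and> \<not> N \<subseteq> (\<Union>i\<in>I. C i)"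
proof -
  have central: "\<exists>N. N \<lhd> G \<and> N \<subseteq> H \<and> card H \<le> p ^ n * card N \<and> cl_f G f N \<le> n + m
           \<and> \<not> N \<subseteq> (\<Union>i\<in>I. C i)"
    if "1 \<le> m" and H: "H \<lhd> G" and C: "\<And>i. i \<in> I \<Longrightarrow> C i \<lhd> G \<and> C i \<subset> H"
      and "f H m \<subseteq> centralizer_set G H" for n m H C
  proof (intro exI conjI)
    show "H \<lhd> G" "H \<subseteq> H" by (simp_all add: H)
    show "card H \<le> p ^ n * card H" using two_le_p by simp
    show "cl_f G f H \<le> n + m"
      using cl_f_le[where f = f and N = H, OF \<open>1 \<le> m\<close> \<open>f H m \<subseteq> centralizer_set G H\<close>] by simp
    show "\<not> H \<subseteq> (\<Union>i\<in>I. C i)"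
      using not_covered_by_family[OF normal_imp_subgroup[OF H] \<open>finite I\<close>] \<open>card I < p\<close> C normal_imp_subgroup
      by (meson less_imp_le)
  qed
  show ?thesis
    using assms(5-)
  proof (induction n arbitrary: m H C)
    case (0 m H C)
    show ?case
    proof (cases "f H m \<subseteq> centralizer_set G H")
      case True
      then show ?thesis using central 0 by blast
    next
      case False
      from descent_step[where C = C and n = 0, OF f \<open>finite I\<close> \<open>card I < p\<close> \<open>i0 \<in> I\<close> 0 False]
      show ?thesis by simp
    qed
  next
    case (Suc n m H C)
    show ?case
    proof (cases "f H m \<subseteq> centralizer_set G H")
      case True
      then show ?thesis using central Suc.prems by blast
    next
      case False
      then obtain N C' where N: "N \<lhd> G" "N \<subseteq> H" "card H \<le> p * card N"
        and C': "\<forall>i\<in>I. C' i \<lhd> G \<and> C' i \<subset> N \<and> C i \<inter> N \<subseteq> C' i"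
        and bound: "\<forall>g\<in>N - (\<Union>i\<in>I. C' i). b_fun G p (f N (m + 1)) g \<le> real n"
        using descent_step[where C = C and n = "Suc n", OF f \<open>finite I\<close> \<open>card I < p\<close> \<open>i0 \<in> I\<close>
            Suc.prems False] by auto
      obtain N' where N': "N' \<lhd> G" "N' \<subseteq> N" "card N \<le> p ^ n * card N'"
        and "cl_f G f N' \<le> n + (m + 1)" and "\<not> N' \<subseteq> (\<Union>i\<in>I. C' i)"
        using Suc.IH[of "m + 1" N C'] N(1) C' bound by auto
      have "card H \<le> p * (p ^ n * card N')"
        using N(3) N'(3) by (meson le_trans mult_le_mono2)
      then have "card H \<le> p ^ Suc n * card N'" by (simp add: mult.assoc)
      moreover have "\<not> N' \<subseteq> (\<Union>i\<in>I. C i)"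
        using \<open>\<not> N' \<subseteq> (\<Union>i\<in>I. C' i)\<close> N'(2) C' by blast
      moreover have "N' \<subseteq> H" using N'(2) N(2) by blast
      moreover have "cl_f G f N' \<le> Suc n + m" using \<open>cl_f G f N' \<le> n + (m + 1)\<close> by simp
      ultimately show ?thesis using N'(1) by blast
    qed
  qed
qed

end

lemma log_div_le_of_le_power:
  fixes b x y :: real
  assumes "1 < b" and "0 < x" and "0 < y" and "x \<le> b ^ n * y"
  shows "log b (x / y) \<le> n"
proof -
  have "x / y \<le> b ^ n" using assms(3,4) by (simp add: divide_le_eq)
  then have "log b (x / y) \<le> log b (b ^ n)"
    using assms(2,3) by (intro log_mono[OF assms(1)]) simp_all
  also have "\<dots> = n" using assms(1) by (simp add: log_nat_power)
  finally show ?thesis .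
qed

theorem theorem1:
  fixes G :: "('a, 'b) monoid_scheme" and p n m :: nat and f :: "'a set \<Rightarrow> nat \<Rightarrow> 'a set"
    and H :: "'a set" and C :: "nat \<Rightarrow> 'a set"
  assumes "Factorial_Ring.prime p" and "p > 2" and "m \<ge> 1"
    and "p_group G p"
    and "f \<in> F_class G"
    and "H \<lhd> G"
    and "\<And>i. i \<in> {1..p-1} \<Longrightarrow> C i \<lhd> G"
    and "\<And>i. i \<in> {1..p-1} \<Longrightarrow> C i \<subset> H"
    and "\<And>g. g \<in> H - (\<Union>i\<in>{1..p-1}. C i) \<Longrightarrow> b_fun G p (f H m) g \<le> real n"
  shows "\<exists>N. N \<lhd> G \<and> N \<subseteq> H
            \<and> log (real p) (real (card H) / real (card N)) \<le> real n
            \<and> cl_f G f N \<le> n + m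
            \<and> \<not> N \<subseteq> (\<Union>i\<in>{1..p-1}. C i)"
proof -
  interpret finite_p_group G p
    using assms(1,4) unfolding p_group_def
    by (intro finite_p_group.intro finite_p_group_axioms.intro) (auto simp: order_def)
  have I: "finite {1..p-1}" "card {1..p-1} < p" "1 \<in> {1..p-1}"
    using \<open>p > 2\<close> by auto
  have "C i \<lhd> G \<and> C i \<subset> H" if "i \<in> {1..p-1}" for i
    using assms(7,8) that by blast
  from exists_normal_subgroup_cl_f_le[where C = C, OF assms(5) I assms(3,6) this assms(9)]
  obtain N where N: "N \<lhd> G" "N \<subseteq> H" "cl_f G f N \<le> n + m" "\<not> N \<subseteq> (\<Union>i\<in>{1..p-1}. C i)"
    and "card H \<le> p ^ n * card N"
    by blast
  then have "real (card H) \<le> real (p ^ n * card N)" by (simp only: of_nat_le_iff)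
  then have "real (card H) \<le> real p ^ n * real (card N)" by simp
  then have "log (real p) (real (card H) / real (card N)) \<le> real n"
    using card_subgroup_pos normal_imp_subgroup N(1) assms(6) two_le_p
    by (intro log_div_le_of_le_power) auto
  then show ?thesis using N by blast
qed

end
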